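(* In the standing setup, assume $A$ is generic and $\det f_0'(x)$ is not identically zero. Then $p_0=q_1+q_2+q_3$. Define $s_1=1-2\varepsilon^2(q_2+q_3)$, $s_2=1-2\varepsilon^2(q_1+q_3)$, $s_3=1-2\varepsilon^2(q_1+q_2)$, $s_0=1$, and (for $\varepsilon\ne0$) $P_0=\tfrac14\big(\tfrac1{s_0}+\tfrac1{s_1}+\tfrac1{s_2}+\tfrac1{s_3}\big)$, $Q_1=\tfrac1{4\varepsilon^2}\big(-\tfrac1{s_0}-\tfrac1{s_1}+\tfrac1{s_2}+\tfrac1{s_3}\big)$, $Q_2=\tfrac1{4\varepsilon^2}\big(-\tfrac1{s_0}+\tfrac1{s_1}-\tfrac1{s_2}+\tfrac1{s_3}\big)$, $Q_3=\tfrac1{4\varepsilon^2}\big(-\tfrac1{s_0}+\tfrac1{s_1}+\tfrac1{s_2}-\tfrac1{s_3}\big)$. Then at every $x$ with $s_1(x,\varepsilon)s_2(x,\varepsilon)s_3(x,\varepsilon)\neq0$, the matrix $\Pi(x)=J-\varepsilon^2(f_0'(x))^2J$ is invertible and $$\Pi(x)^{-1}=-P_0(x,\varepsilon)J-\varepsilon^2\sum_{i=1}^3Q_i(x,\varepsilon)B_iJ.$$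
   Context: Standing setup: $J=\begin{pmatrix}0&I_3\\-I_3&0\end{pmatrix}$ ($6\times6$). $A$ is a fixed real $6\times 6$ skew-Hamiltonian matrix ($A^{\rm T}J=JA$). $H_0$ is a homogeneous cubic polynomial on $\mathbb R^6$ with $A\nabla^2H_0(x)=\nabla^2H_0(x)A^{\rm T}$ for all $x$ ($\nabla^2$ = Hesse matrix), $f_0=J\nabla H_0$, with Jacobi matrix $f_0'$. Genericity: the characteristic polynomial of $A$ (a square of a cubic) has three pairwise distinct roots $\lambda_1,\lambda_2,\lambda_3$, each a double eigenvalue. $B_i=\alpha_iI+\beta_iA+\gamma_iA^2$ ($i=1,2,3$), where $\alpha_i+\beta_i\lambda+\gamma_i\lambda^2$ is the unique polynomial of degree $\le2$ equal to $-1$ at $\lambda_i$ and to $1$ at the other two eigenvalues. $p_0(x)=\tfrac18\operatorname{tr}(f_0'(x))^2$, $q_i(x)=\tfrac18\operatorname{tr}(B_i^{\rm T}(f_0'(x))^2)$. *)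

theory Defs
  imports "HOL-Analysis.Analysis"
begin

type_synonym rvec = "real ^ 6"
type_synonym rmat = "real ^ 6 ^ 6"
type_synonym cmat = "complex ^ 6 ^ 6"

text \<open>Indices of type 6 are represented by 0..5 via Rep_bit0; indices 0,1,2 are q, 3,4,5 are p.
  J = [[0, I3], [-I3, 0]].\<close>
definition Jmat :: "'a::ring_1 ^ 6 ^ 6" where
  "Jmat = (\<chi> i j. if Rep_bit0 j = Rep_bit0 i + 3 then 1
                   else if Rep_bit0 i = Rep_bit0 j + 3 then - 1 else 0)"

definition partial :: "(real ^ 6 \<Rightarrow> real) \<Rightarrow> 6 \<Rightarrow> real ^ 6 \<Rightarrow> real" where
  "partial F i x = deriv (\<lambda>t. F (x + t *\<^sub>R axis i 1)) 0"

definition grad :: "(real ^ 6 \<Rightarrow> real) \<Rightarrow> real ^ 6 \<Rightarrow> real ^ 6" where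
  "grad F x = (\<chi> i. partial F i x)"

definition jacobian :: "(real ^ 6 \<Rightarrow> real ^ 6) \<Rightarrow> real ^ 6 \<Rightarrow> real ^ 6 ^ 6" where
  "jacobian F x = (\<chi> i j. partial (\<lambda>y. F y $ i) j x)"

definition hesse :: "(real ^ 6 \<Rightarrow> real) \<Rightarrow> real ^ 6 \<Rightarrow> real ^ 6 ^ 6" where
  "hesse F x = jacobian (grad F) x"

definition homogeneous_cubic :: "(real ^ 6 \<Rightarrow> real) \<Rightarrow> bool" where
  "homogeneous_cubic H \<longleftrightarrow> (\<exists>c :: 6 \<Rightarrow> 6 \<Rightarrow> 6 \<Rightarrow> real.
      \<forall>x. H x = (\<Sum>i\<in>UNIV. \<Sum>j\<in>UNIV. \<Sum>k\<in>UNIV. c i j k * x $ i * x $ j * x $ k))"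

definition skew_hamiltonian :: "real ^ 6 ^ 6 \<Rightarrow> bool" where
  "skew_hamiltonian A \<longleftrightarrow> transpose A ** Jmat = Jmat ** A"

definition cpx :: "real ^ 6 ^ 6 \<Rightarrow> complex ^ 6 ^ 6" where
  "cpx M = (\<chi> i j. complex_of_real (M $ i $ j))"

definition cscale :: "complex \<Rightarrow> complex ^ 6 ^ 6 \<Rightarrow> complex ^ 6 ^ 6" where
  "cscale c M = (\<chi> i j. c * M $ i $ j)"

definition f0 :: "(real ^ 6 \<Rightarrow> real) \<Rightarrow> real ^ 6 \<Rightarrow> real ^ 6" where
  "f0 H x = Jmat *v grad H x"

definition f0' :: "(real ^ 6 \<Rightarrow> real) \<Rightarrow> real ^ 6 \<Rightarrow> real ^ 6 ^ 6" where
  "f0' H x = jacobian (f0 H) x"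

definition Bmat :: "real ^ 6 ^ 6 \<Rightarrow> complex \<Rightarrow> complex \<Rightarrow> complex \<Rightarrow> complex ^ 6 ^ 6" where
  "Bmat A a b c = cscale a (mat 1) + cscale b (cpx A) + cscale c (cpx (A ** A))"

definition p0 :: "(real ^ 6 \<Rightarrow> real) \<Rightarrow> real ^ 6 \<Rightarrow> real" where
  "p0 H x = trace (f0' H x ** f0' H x) / 8"

definition qfun :: "complex ^ 6 ^ 6 \<Rightarrow> (real ^ 6 \<Rightarrow> real) \<Rightarrow> real ^ 6 \<Rightarrow> complex" where
  "qfun Bi H x = trace (transpose Bi ** cpx (f0' H x ** f0' H x)) / 8"

end

theory Submission
  imports Defs
begin

text \<open>Over \<open>\<complex>\<close>, a \<open>6 \<times> 6\<close> skew-Hamiltonian matrix \<open>X\<close> satisfies a cubic Cayley--Hamilton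
  identity \<open>X\<^sup>3 = e\<^sub>1 X\<^sup>2 - e\<^sub>2 X + e\<^sub>3\<close> with coefficients polynomial in traces (its characteristic
  polynomial is a square). For \<open>A\<close> the roots of this cubic are \<open>\<lambda>\<^sub>1, \<lambda>\<^sub>2, \<lambda>\<^sub>3\<close>, so the Lagrange
  polynomials \<open>P\<^sub>j = (I - B\<^sub>j)/2\<close> of \<open>A\<close> are its spectral projections: \<open>A P\<^sub>j = \<lambda>\<^sub>j P\<^sub>j\<close>,
  \<open>P\<^sub>1 + P\<^sub>2 + P\<^sub>3 = I\<close> and \<open>tr P\<^sub>j = 2\<close>.

  Since \<open>f\<^sub>0' = J S\<close> with \<open>S\<close> the symmetric Hesse matrix and \<open>A S = S A\<^sup>T\<close>, the matrix
  \<open>N = S J S J\<close> is skew-Hamiltonian, commutes with \<open>A\<close> and has transpose \<open>(f\<^sub>0')\<^sup>2\<close>. Polarizing the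
  cubic identity in the direction of \<open>N\<close> shows that \<open>N\<close> acts on each eigenspace of \<open>A\<close> as a scalar
  \<open>c\<^sub>j\<close>. Now \<open>q\<^sub>i = tr (N B\<^sub>i) / 8\<close>, whence \<open>q\<^sub>1 + q\<^sub>2 + q\<^sub>3 = tr N / 8 = p\<^sub>0\<close> and
  \<open>c\<^sub>1 = 2 (q\<^sub>2 + q\<^sub>3)\<close> etc., i.e. \<open>I - \<epsilon>\<^sup>2 N = \<Sum> s\<^sub>j P\<^sub>j\<close>. Complexified, \<open>\<Pi> = J (I - \<epsilon>\<^sup>2 N)\<close>,
  so \<open>\<Pi>\<^sup>-\<^sup>1 = - (\<Sum> P\<^sub>j / s\<^sub>j) J\<close>, which is the stated combination of the \<open>B\<^sub>i J\<close>.\<close>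

lemma exhaust_6:
  fixes x :: 6
  shows "x = 0 \<or> x = 1 \<or> x = 2 \<or> x = 3 \<or> x = 4 \<or> x = 5"
proof (induct x)
  case (of_int z)
  then have "z = 0 \<or> z = 1 \<or> z = 2 \<or> z = 3 \<or> z = 4 \<or> z = 5" by fastforce
  then show ?case by auto
qed

lemma forall_6: "(\<forall>i::6. P i) \<longleftrightarrow> P 0 \<and> P 1 \<and> P 2 \<and> P 3 \<and> P 4 \<and> P 5"
  by (metis exhaust_6)

lemma sum_6: "sum f (UNIV::6 set) = f 0 + f 1 + f 2 + f 3 + f 4 + f 5"
proof -
  have UNIV_6: "UNIV = {0, 1, 2, 3, 4, 5::6}" using exhaust_6 by auto
  show ?thesis unfolding UNIV_6 by (simp add: add.assoc)
qed

lemma Rep_bit0_6: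
  "Rep_bit0 (0::6) = 0" "Rep_bit0 (1::6) = 1" "Rep_bit0 (2::6) = 2"
  "Rep_bit0 (3::6) = 3" "Rep_bit0 (4::6) = 4" "Rep_bit0 (5::6) = 5"
  by (simp_all add: bit0.Rep_numeral bit0.Rep_0 bit0.Rep_1)

lemma Jmat_entries: "Jmat $ i $ j = (if Rep_bit0 j = Rep_bit0 i + 3 then 1
    else if Rep_bit0 i = Rep_bit0 j + 3 then - 1 else 0)"
  by (simp add: Jmat_def)

lemma Jmat_squared: "(Jmat :: 'a::ring_1^6^6) ** Jmat = - mat 1"
  unfolding vec_eq_iff forall_6
  by (simp add: matrix_matrix_mult_def sum_6 Jmat_entries Rep_bit0_6 mat_def)

lemma transpose_Jmat: "transpose (Jmat :: 'a::ring_1^6^6) = - Jmat"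
  unfolding vec_eq_iff forall_6 by (simp add: transpose_def Jmat_entries Rep_bit0_6)

lemma matrix_add_rdistrib: "((A::'a::semiring_1^'n^'m) + B) ** C = A ** C + B ** C"
  by (simp add: matrix_matrix_mult_def vec_eq_iff distrib_right sum.distrib)

lemma matrix_diff_ldistrib: "(A::'a::ring_1^'n^'m) ** (B - C) = A ** B - A ** C"
  by (simp add: matrix_matrix_mult_def vec_eq_iff right_diff_distrib sum_subtractf)

lemma matrix_diff_rdistrib: "((A::'a::ring_1^'n^'m) - B) ** C = A ** C - B ** C"
  by (simp add: matrix_matrix_mult_def vec_eq_iff left_diff_distrib sum_subtractf)

lemma matrix_minus_left: "(- (A::'a::ring_1^'n^'m)) ** B = - (A ** B)"
  by (simp add: matrix_matrix_mult_def vec_eq_iff sum_negf)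

lemma matrix_minus_right: "(A::'a::ring_1^'n^'m) ** (- B) = - (A ** B)"
  by (simp add: matrix_matrix_mult_def vec_eq_iff sum_negf)

lemma trace_transpose: "trace (transpose (X::'a::semiring_1^'n^'n)) = trace X"
  by (simp add: trace_def transpose_def)

lemma det_mat: "det (mat c :: 'a::comm_ring_1^'n^'n) = c ^ CARD('n)"
  by (subst det_diagonal) (simp_all add: mat_def)

lemma cscale_mult_left: "cscale c X ** Y = cscale c (X ** Y)"
  by (simp add: cscale_def matrix_matrix_mult_def vec_eq_iff sum_distrib_left mult.assoc)

lemma cscale_mult_right: "X ** cscale c Y = cscale c (X ** Y)"
  by (simp add: cscale_def matrix_matrix_mult_def vec_eq_iff sum_distrib_left mult.left_commute)

lemma cscale_add_right: "cscale c (X + Y) = cscale c X + cscale c Y"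
  by (simp add: cscale_def vec_eq_iff distrib_left)

lemma cscale_diff_right: "cscale c (X - Y) = cscale c X - cscale c Y"
  by (simp add: cscale_def vec_eq_iff right_diff_distrib)

lemma cscale_add_left: "cscale (c + d) X = cscale c X + cscale d X"
  by (simp add: cscale_def vec_eq_iff distrib_right)

lemma cscale_diff_left: "cscale (c - d) X = cscale c X - cscale d X"
  by (simp add: cscale_def vec_eq_iff left_diff_distrib)

lemma cscale_minus_left: "cscale (- c) X = - cscale c X"
  by (simp add: cscale_def vec_eq_iff)

lemma cscale_cscale: "cscale c (cscale d X) = cscale (c * d) X"
  by (simp add: cscale_def vec_eq_iff mult.assoc)

lemma cscale_one [simp]: "cscale 1 X = X"
  by (simp add: cscale_def vec_eq_iff)

lemma cscale_zero [simp]: "cscale 0 X = 0"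
  by (simp add: cscale_def vec_eq_iff)

lemma mat_eq_cscale: "mat c = cscale c (mat 1)"
  by (simp add: cscale_def vec_eq_iff mat_def)

lemma trace_cscale: "trace (cscale c X) = c * trace X"
  by (simp add: cscale_def trace_def sum_distrib_left)

lemmas cscale_simps = cscale_mult_left cscale_mult_right cscale_add_right cscale_diff_right
  cscale_add_left cscale_diff_left cscale_minus_left cscale_cscale

lemma cpx_mult: "cpx (X ** Y) = cpx X ** cpx Y"
  by (simp add: cpx_def matrix_matrix_mult_def vec_eq_iff)

lemma cpx_transpose: "cpx (transpose X) = transpose (cpx X)"
  by (simp add: cpx_def transpose_def vec_eq_iff)

lemma cpx_diff: "cpx (X - Y) = cpx X - cpx Y"
  by (simp add: cpx_def vec_eq_iff)

lemma cpx_scaleR: "cpx (r *\<^sub>R X) = cscale (complex_of_real r) (cpx X)"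
  by (simp add: cpx_def cscale_def vec_eq_iff)

lemma cpx_mat: "cpx (mat 1) = mat 1"
  by (simp add: cpx_def mat_def vec_eq_iff)

lemma cpx_Jmat: "cpx Jmat = Jmat"
  by (simp add: cpx_def Jmat_def vec_eq_iff)

lemma trace_cpx: "trace (cpx X) = complex_of_real (trace X)"
  by (simp add: cpx_def trace_def)

lemma det_cpx: "det (cpx X) = complex_of_real (det X)"
  by (simp add: cpx_def det_def of_real_sum of_real_prod)

lemma invertible_cpx_right_inverse:
  assumes R: "cpx M ** R = mat 1"
  shows "invertible M \<and> cpx (matrix_inv M) = R"
proof
  have "det (cpx M) * det R = 1" using R by (metis det_mul det_I)
  then show inv: "invertible M" by (auto simp: invertible_det_nz det_cpx)
  then have "matrix_inv M ** M = mat 1"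
    unfolding invertible_def matrix_inv_def by (rule someI2_ex) blast
  then have "cpx (matrix_inv M) ** cpx M = mat 1" by (metis cpx_mult cpx_mat)
  then show "cpx (matrix_inv M) = R"
    by (metis R matrix_mul_assoc matrix_mul_lid matrix_mul_rid)
qed

section \<open>Skew-Hamiltonian matrices\<close>

definition skew_hamiltonian_matrix :: "'a::comm_ring_1^6^6 \<Rightarrow> bool" where
  "skew_hamiltonian_matrix X \<longleftrightarrow> transpose X ** Jmat = Jmat ** X"

text \<open>In \<open>3 \<times> 3\<close> blocks, \<open>X = [[E, F], [G, E\<^sup>T]]\<close> with \<open>F\<close> and \<open>G\<close> skew-symmetric.\<close>

lemma skew_hamiltonian_matrix_entries:
  fixes X :: "complex^6^6"
  assumes "skew_hamiltonian_matrix X"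
  shows "X$0$3 = 0" "X$1$4 = 0" "X$2$5 = 0" "X$1$3 = - X$0$4" "X$2$3 = - X$0$5" "X$2$4 = - X$1$5"
        "X$3$0 = 0" "X$4$1 = 0" "X$5$2 = 0" "X$3$1 = - X$4$0" "X$3$2 = - X$5$0" "X$4$2 = - X$5$1"
        "X$3$3 = X$0$0" "X$3$4 = X$1$0" "X$3$5 = X$2$0"
        "X$4$3 = X$0$1" "X$4$4 = X$1$1" "X$4$5 = X$2$1"
        "X$5$3 = X$0$2" "X$5$4 = X$1$2" "X$5$5 = X$2$2"
proof -
  have e: "(transpose X ** Jmat) $ i $ j = (Jmat ** X) $ i $ j" for i j
    using assms by (simp add: skew_hamiltonian_matrix_def)
  note entries = matrix_matrix_mult_def transpose_def sum_6 Jmat_entries Rep_bit0_6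
  show "X$0$3 = 0" "X$1$4 = 0" "X$2$5 = 0" "X$1$3 = - X$0$4" "X$2$3 = - X$0$5" "X$2$4 = - X$1$5"
        "X$3$0 = 0" "X$4$1 = 0" "X$5$2 = 0" "X$3$1 = - X$4$0" "X$3$2 = - X$5$0" "X$4$2 = - X$5$1"
        "X$3$3 = X$0$0" "X$3$4 = X$1$0" "X$3$5 = X$2$0"
        "X$4$3 = X$0$1" "X$4$4 = X$1$1" "X$4$5 = X$2$1"
        "X$5$3 = X$0$2" "X$5$4 = X$1$2" "X$5$5 = X$2$2"
    using e[of 3 3] e[of 4 4] e[of 5 5] e[of 3 4] e[of 3 5] e[of 4 5]
      e[of 0 0] e[of 1 1] e[of 2 2] e[of 0 1] e[of 0 2] e[of 1 2]
      e[of 0 3] e[of 0 4] e[of 0 5] e[of 1 3] e[of 1 4] e[of 1 5] e[of 2 3] e[of 2 4] e[of 2 5]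
    by (simp_all add: entries)
qed

lemma skew_hamiltonian_cpx: "skew_hamiltonian A \<Longrightarrow> skew_hamiltonian_matrix (cpx A)"
  unfolding skew_hamiltonian_def skew_hamiltonian_matrix_def
  by (metis cpx_mult cpx_transpose cpx_Jmat)

text \<open>The polarization of the cubic identity satisfied by a \<open>6 \<times> 6\<close> skew-Hamiltonian matrix,
  checked entrywise on the block form.\<close>

lemma skew_hamiltonian_polarized_cubic:
  fixes X Y :: "complex^6^6"
  assumes X: "skew_hamiltonian_matrix X" and Y: "skew_hamiltonian_matrix Y"
  shows "cscale 48 (X ** X ** Y + X ** Y ** X + Y ** X ** X)
      - cscale (24 * trace Y) (X ** X) - cscale (24 * trace X) (X ** Y + Y ** X)
      + cscale (12 * trace X * trace Y - 24 * trace (X ** Y)) X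
      + cscale (6 * (trace X)^2 - 12 * trace (X ** X)) Y
    = cscale (3 * (trace X)^2 * trace Y - 6 * trace Y * trace (X ** X)
        - 12 * trace X * trace (X ** Y) + 24 * trace (X ** X ** Y)) (mat 1)"
  unfolding vec_eq_iff forall_6
  apply (simp add: cscale_def mat_def)
  apply (simp only: vec_lambda_beta vector_add_component matrix_matrix_mult_def trace_def sum_6
      skew_hamiltonian_matrix_entries[OF X] skew_hamiltonian_matrix_entries[OF Y])
  apply (simp only: mult_zero_left mult_zero_right add_0_left add_0_right mult_minus_left
      mult_minus_right minus_minus diff_0_right)
  apply (intro conjI)
  by algebra+

lemma skew_hamiltonian_cubic:
  fixes X :: "complex^6^6"
  assumes "skew_hamiltonian_matrix X"
  shows "X ** X ** X = cscale (trace X / 2) (X ** X)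
    - cscale ((trace X)^2 / 8 - trace (X ** X) / 4) X
    + cscale (((trace X)^3 - 6 * trace X * trace (X ** X) + 8 * trace (X ** X ** X)) / 48) (mat 1)"
proof -
  let ?t = "trace X" and ?q = "trace (X ** X)" and ?u = "trace (X ** X ** X)"
  have "144 * (X ** X ** X) $ i $ k = 72 * ?t * (X ** X) $ i $ k - (18 * ?t^2 - 36 * ?q) * X $ i $ k
      + (3 * ?t^3 - 18 * ?t * ?q + 24 * ?u) * mat 1 $ i $ k" for i k
    using arg_cong[OF skew_hamiltonian_polarized_cubic[OF assms assms], of "\<lambda>M. M $ i $ k"]
    by (simp add: cscale_def algebra_simps power2_eq_square power3_eq_cube)
  then have entry: "(X ** X ** X) $ i $ k = (72 * ?t * (X ** X) $ i $ k - (18 * ?t^2 - 36 * ?q) * X $ i $ k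
      + (3 * ?t^3 - 18 * ?t * ?q + 24 * ?u) * mat 1 $ i $ k) / 144" for i k
    by (simp add: eq_divide_eq ac_simps)
  show ?thesis
    unfolding vec_eq_iff by (simp add: cscale_def entry field_simps)
qed

text \<open>Polarizing the cubic identity in the direction of a commuting \<open>N\<close> and restricting it to a
  simple eigenspace of \<open>X\<close> leaves \<open>48 (l\<^sub>1 - l\<^sub>2) (l\<^sub>1 - l\<^sub>3) N P\<close> as a multiple of \<open>P\<close>.\<close>

lemma commuting_skew_hamiltonian_eigenvector:
  fixes X N P :: "complex^6^6"
  assumes skX: "skew_hamiltonian_matrix X" and skN: "skew_hamiltonian_matrix N"
    and XN: "X ** N = N ** X" and XP: "X ** P = cscale l1 P"
    and tr1: "trace X = 2 * (l1 + l2 + l3)" and tr2: "trace (X ** X) = 2 * (l1^2 + l2^2 + l3^2)"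
    and "l1 \<noteq> l2" "l1 \<noteq> l3"
  shows "\<exists>c. N ** P = cscale c P"
proof -
  define W where "W = N ** P"
  have XW: "X ** W = cscale l1 W"
    unfolding W_def by (metis XN XP cscale_mult_right matrix_mul_assoc)
  have products: "(X ** X ** N) ** P = cscale (l1 * l1) W" "(X ** N ** X) ** P = cscale (l1 * l1) W"
    "(N ** X ** X) ** P = cscale (l1 * l1) W" "(X ** X) ** P = cscale (l1 * l1) P"
    "(X ** N) ** P = cscale l1 W" "(N ** X) ** P = cscale l1 W" "N ** P = W"
    by (simp_all add: matrix_mul_assoc[symmetric] XP XW W_def[symmetric] cscale_mult_right cscale_cscale)
  let ?k = "3 * (trace X)^2 * trace N - 6 * trace N * trace (X ** X)
    - 12 * trace X * trace (X ** N) + 24 * trace (X ** X ** N)"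
  let ?r = "24 * trace N * l1^2 - (12 * trace X * trace N - 24 * trace (X ** N)) * l1 + ?k"
  have restricted: "cscale 48 (cscale (l1 * l1) W + cscale (l1 * l1) W + cscale (l1 * l1) W)
      - cscale (24 * trace N) (cscale (l1 * l1) P) - cscale (24 * trace X) (cscale l1 W + cscale l1 W)
      + cscale (12 * trace X * trace N - 24 * trace (X ** N)) (cscale l1 P)
      + cscale (6 * (trace X)^2 - 12 * trace (X ** X)) W = cscale ?k P"
    using arg_cong[OF skew_hamiltonian_polarized_cubic[OF skX skN], of "\<lambda>M. M ** P"]
    by (simp only: matrix_add_rdistrib matrix_diff_rdistrib cscale_mult_left products XP matrix_mul_lid)
  have scaled: "48 * ((l1 - l2) * (l1 - l3)) * W $ i $ k = ?r * P $ i $ k" for i k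
    using arg_cong[OF restricted, of "\<lambda>M. M $ i $ k"] unfolding tr1 tr2 by (simp add: cscale_def) algebra
  have "48 * ((l1 - l2) * (l1 - l3)) \<noteq> 0" using assms(7,8) by simp
  then have "W $ i $ k = ?r * P $ i $ k / (48 * ((l1 - l2) * (l1 - l3)))" for i k
    by (metis scaled nonzero_mult_div_cancel_left)
  then have "W = cscale (?r / (48 * ((l1 - l2) * (l1 - l3)))) P"
    by (simp add: vec_eq_iff cscale_def)
  then show ?thesis unfolding W_def by blast
qed

lemma symmetric_commuting_product:
  fixes X S :: "complex^6^6"
  assumes sym: "transpose S = S" and XS: "X ** S = S ** transpose X"
    and skX: "skew_hamiltonian_matrix X"
  defines "N \<equiv> S ** Jmat ** S ** Jmat"
  shows "skew_hamiltonian_matrix N" "X ** N = N ** X" "transpose N = Jmat ** S ** Jmat ** S"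
proof -
  have XJ: "transpose X ** Jmat = Jmat ** X" using skX by (simp add: skew_hamiltonian_matrix_def)
  have XS': "X ** (S ** Y) = S ** (transpose X ** Y)" for Y
    by (metis XS matrix_mul_assoc)
  have XJ': "transpose X ** (Jmat ** Y) = Jmat ** (X ** Y)" for Y
    by (metis XJ matrix_mul_assoc)
  show "X ** N = N ** X" unfolding N_def
    by (simp add: matrix_mul_assoc[symmetric] XS' XJ' XJ)
  show tN: "transpose N = Jmat ** S ** Jmat ** S" unfolding N_def
    by (simp add: matrix_transpose_mul transpose_Jmat sym matrix_minus_left matrix_minus_right matrix_mul_assoc)
  show "skew_hamiltonian_matrix N"
    unfolding skew_hamiltonian_matrix_def tN unfolding N_def by (simp add: matrix_mul_assoc)
qed

section \<open>Quadratic polynomials in a matrix\<close>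

lemma quadratic_eq_0_at_three_points:
  fixes a b c z1 z2 z3 :: "'a::idom"
  assumes "a * z1^2 + b * z1 + c = 0" "a * z2^2 + b * z2 + c = 0" "a * z3^2 + b * z3 + c = 0"
    and "z1 \<noteq> z2" "z1 \<noteq> z3" "z2 \<noteq> z3"
  shows "a = 0" "b = 0" "c = 0"
proof -
  have "(z1 - z2) * (a * (z1 + z2) + b) = 0" "(z1 - z3) * (a * (z1 + z3) + b) = 0"
    using assms(1-3) by algebra+
  then have ab: "a * (z1 + z2) + b = 0" "a * (z1 + z3) + b = 0"
    using assms(4,5) by simp_all
  then have "(z2 - z3) * a = 0" by algebra
  then show "a = 0" using assms(6) by simp
  then show "b = 0" using ab by simp
  then show "c = 0" using \<open>a = 0\<close> assms(1) by simp
qed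

lemma monic_cubic_coeffs_from_roots:
  fixes e1 e2 e3 l1 l2 l3 :: "'a::idom"
  assumes "l1 \<noteq> l2" "l1 \<noteq> l3" "l2 \<noteq> l3"
    and roots: "\<forall>z \<in> {l1, l2, l3}. z^3 - e1 * z^2 + e2 * z - e3 = 0"
  shows "e1 = l1 + l2 + l3" "e2 = l1 * l2 + l1 * l3 + l2 * l3" "e3 = l1 * l2 * l3"
proof -
  define a b c where "a = l1 + l2 + l3 - e1" and "b = e2 - (l1 * l2 + l1 * l3 + l2 * l3)"
    and "c = l1 * l2 * l3 - e3"
  have diff: "a * z^2 + b * z + c = (z^3 - e1 * z^2 + e2 * z - e3) - (z - l1) * (z - l2) * (z - l3)" for z
    unfolding a_def b_def c_def by algebra
  have "a * z^2 + b * z + c = 0" if "z \<in> {l1, l2, l3}" for z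
    unfolding diff using roots that by auto
  then have "a = 0" "b = 0" "c = 0"
    using quadratic_eq_0_at_three_points[of a l1 b c l2 l3] assms(1-3) by auto
  then show "e1 = l1 + l2 + l3" "e2 = l1 * l2 + l1 * l3 + l2 * l3" "e3 = l1 * l2 * l3"
    unfolding a_def b_def c_def by algebra+
qed

definition quad_poly_mat :: "complex^6^6 \<Rightarrow> complex \<Rightarrow> complex \<Rightarrow> complex \<Rightarrow> complex^6^6" where
  "quad_poly_mat X a b c = cscale a (mat 1) + cscale b X + cscale c (X ** X)"

lemma Bmat_eq_quad_poly_mat: "Bmat A a b c = quad_poly_mat (cpx A) a b c"
  by (simp add: Bmat_def quad_poly_mat_def cpx_mult)

lemma quad_poly_mat_add:
  "quad_poly_mat X a b c + quad_poly_mat X a' b' c' = quad_poly_mat X (a + a') (b + b') (c + c')"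
  unfolding quad_poly_mat_def by (simp add: cscale_simps algebra_simps)

lemma quad_poly_mat_diff:
  "quad_poly_mat X a b c - quad_poly_mat X a' b' c' = quad_poly_mat X (a - a') (b - b') (c - c')"
  unfolding quad_poly_mat_def by (simp add: cscale_simps algebra_simps)

lemma cscale_quad_poly_mat: "cscale k (quad_poly_mat X a b c) = quad_poly_mat X (k * a) (k * b) (k * c)"
  unfolding quad_poly_mat_def by (simp add: cscale_simps)

lemma quad_poly_mat_const: "quad_poly_mat X a 0 0 = mat a"
  by (simp add: quad_poly_mat_def mat_eq_cscale[of a])

lemma trace_quad_poly_mat: "trace (quad_poly_mat X a b c) = 6 * a + b * trace X + c * trace (X ** X)"
  by (simp add: quad_poly_mat_def trace_add trace_cscale trace_I)

lemma quad_poly_mat_mult_cubic: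
  assumes "X ** X ** X = cscale e1 (X ** X) - cscale e2 X + cscale e3 (mat 1)"
  shows "X ** quad_poly_mat X a b c = quad_poly_mat X (c * e3) (a - c * e2) (b + c * e1)"
  unfolding quad_poly_mat_def
  by (simp add: cscale_simps matrix_add_ldistrib matrix_mul_assoc assms algebra_simps)

text \<open>\<open>(z - X) (X\<^sup>2 + (z - e\<^sub>1) X + z\<^sup>2 - e\<^sub>1 z + e\<^sub>2) = c(z)\<close> for the cubic \<open>c\<close> annihilating \<open>X\<close>.\<close>

lemma cubic_eq_0_at_eigenvalue:
  assumes cubic: "X ** X ** X = cscale e1 (X ** X) - cscale e2 X + cscale e3 (mat 1)"
    and "det (mat z - X) = 0"
  shows "z^3 - e1 * z^2 + e2 * z - e3 = 0"
proof -
  let ?R = "quad_poly_mat X (z^2 - e1 * z + e2) (z - e1) 1"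
  have "(mat z - X) ** ?R = cscale z ?R - X ** ?R"
    by (simp add: matrix_diff_rdistrib mat_eq_cscale[of z] cscale_mult_left)
  also have "\<dots> = quad_poly_mat X (z^3 - e1 * z^2 + e2 * z - e3) 0 0"
    unfolding quad_poly_mat_mult_cubic[OF cubic] cscale_quad_poly_mat quad_poly_mat_diff
    by (simp add: algebra_simps power2_eq_square power3_eq_cube)
  finally have "det (mat z - X) * det ?R = (z^3 - e1 * z^2 + e2 * z - e3) ^ 6"
    by (simp add: quad_poly_mat_const det_mat flip: det_mul)
  then show ?thesis using assms(2) by simp
qed

text \<open>A quadratic vanishing at \<open>l\<^sub>2, l\<^sub>3\<close> is \<open>w (z - l\<^sub>2) (z - l\<^sub>3)\<close>, so \<open>(X - l\<^sub>1) L(X)\<close> is \<open>w\<close> times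
  the cubic annihilating \<open>X\<close>.\<close>

lemma quad_poly_mat_eigenvector:
  assumes cubic: "X ** X ** X = cscale (l1 + l2 + l3) (X ** X)
      - cscale (l1 * l2 + l1 * l3 + l2 * l3) X + cscale (l1 * l2 * l3) (mat 1)"
    and "l2 \<noteq> l3" and L: "u + v * l2 + w * l2^2 = 0" "u + v * l3 + w * l3^2 = 0"
  shows "X ** quad_poly_mat X u v w = cscale l1 (quad_poly_mat X u v w)"
proof -
  have "(l2 - l3) * (v + w * (l2 + l3)) = 0" using L by algebra
  then have v: "v = - w * (l2 + l3)" using \<open>l2 \<noteq> l3\<close> by (simp add: eq_neg_iff_add_eq_0)
  then have u: "u = w * l2 * l3" using L(1) by algebra
  show ?thesis
    unfolding quad_poly_mat_mult_cubic[OF cubic] cscale_quad_poly_mat u v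
    by (simp add: algebra_simps)
qed

section \<open>Derivatives of a cubic form\<close>

definition cubic_gradient :: "(6 \<Rightarrow> 6 \<Rightarrow> 6 \<Rightarrow> real) \<Rightarrow> 6 \<Rightarrow> real^6 \<Rightarrow> real" where
  "cubic_gradient c l y = (\<Sum>a\<in>UNIV. \<Sum>b\<in>UNIV. \<Sum>d\<in>UNIV. c a b d *
      (axis l 1 $ a * y $ b * y $ d + y $ a * axis l 1 $ b * y $ d + y $ a * y $ b * axis l 1 $ d))"

definition cubic_hessian :: "(6 \<Rightarrow> 6 \<Rightarrow> 6 \<Rightarrow> real) \<Rightarrow> 6 \<Rightarrow> 6 \<Rightarrow> real^6 \<Rightarrow> real" where
  "cubic_hessian c i l y = (\<Sum>a\<in>UNIV. \<Sum>b\<in>UNIV. \<Sum>d\<in>UNIV. c a b d *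
      (axis i 1 $ a * (axis l 1 $ b * y $ d + y $ b * axis l 1 $ d)
     + axis i 1 $ b * (axis l 1 $ a * y $ d + y $ a * axis l 1 $ d)
     + axis i 1 $ d * (axis l 1 $ a * y $ b + y $ a * axis l 1 $ b)))"

lemma cubic_hessian_symmetric: "cubic_hessian c i l y = cubic_hessian c l i y"
  unfolding cubic_hessian_def by (intro sum.cong refl) (simp add: algebra_simps)

lemma line_component: "(y + t *\<^sub>R axis l 1) $ a = y $ a + t * axis l (1::real) $ a"
  by simp

lemma partial_cubic_form:
  "partial (\<lambda>y. \<Sum>a\<in>UNIV. \<Sum>b\<in>UNIV. \<Sum>d\<in>UNIV. c a b d * y $ a * y $ b * y $ d) l y
    = cubic_gradient c l y"
proof -
  have "((\<lambda>t. \<Sum>a\<in>UNIV. \<Sum>b\<in>UNIV. \<Sum>d\<in>UNIV. c a b d * (y + t *\<^sub>R axis l 1) $ a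
      * (y + t *\<^sub>R axis l 1) $ b * (y + t *\<^sub>R axis l 1) $ d) has_field_derivative cubic_gradient c l y) (at 0)"
    unfolding line_component cubic_gradient_def
    by (rule derivative_eq_intros refl | simp add: algebra_simps)+
  then show ?thesis unfolding partial_def by (rule DERIV_imp_deriv)
qed

lemma cubic_gradient_line_derivative:
  "((\<lambda>t. cubic_gradient c i (y + t *\<^sub>R axis l 1)) has_field_derivative cubic_hessian c i l y) (at 0)"
  unfolding line_component cubic_gradient_def cubic_hessian_def
  by (rule derivative_eq_intros refl | simp add: algebra_simps)+

lemma homogeneous_cubic_derivatives:
  assumes "homogeneous_cubic H"
  obtains c where "\<And>y. grad H y = (\<chi> i. cubic_gradient c i y)"
    and "\<And>x. hesse H x = (\<chi> i l. cubic_hessian c i l x)"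
proof -
  obtain c where "\<And>y. H y = (\<Sum>a\<in>UNIV. \<Sum>b\<in>UNIV. \<Sum>d\<in>UNIV. c a b d * y $ a * y $ b * y $ d)"
    using assms unfolding homogeneous_cubic_def by blast
  then have "H = (\<lambda>y. \<Sum>a\<in>UNIV. \<Sum>b\<in>UNIV. \<Sum>d\<in>UNIV. c a b d * y $ a * y $ b * y $ d)" by blast
  then have grad: "grad H y = (\<chi> i. cubic_gradient c i y)" for y
    by (simp add: grad_def partial_cubic_form)
  have "partial (cubic_gradient c i) l x = cubic_hessian c i l x" for i l x
    unfolding partial_def by (rule DERIV_imp_deriv[OF cubic_gradient_line_derivative])
  then have "hesse H x = (\<chi> i l. cubic_hessian c i l x)" for x
    by (simp add: hesse_def jacobian_def grad)
  with grad show ?thesis by (rule that)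
qed

lemma hesse_symmetric:
  assumes "homogeneous_cubic H"
  shows "transpose (hesse H x) = hesse H x"
  using assms by (rule homogeneous_cubic_derivatives)
    (simp add: transpose_def cubic_hessian_symmetric)

lemma f0'_eq_Jmat_hesse:
  assumes "homogeneous_cubic H"
  shows "f0' H x = Jmat ** hesse H x"
proof -
  obtain c where grad: "\<And>y. grad H y = (\<chi> i. cubic_gradient c i y)"
    and hesse: "\<And>x. hesse H x = (\<chi> i l. cubic_hessian c i l x)"
    using homogeneous_cubic_derivatives[OF assms] by blast
  have "((\<lambda>t. f0 H (x + t *\<^sub>R axis l 1) $ i) has_field_derivative
      (\<Sum>k\<in>UNIV. Jmat $ i $ k * cubic_hessian c k l x)) (at 0)" for i l
    unfolding f0_def matrix_vector_mult_def vec_lambda_beta grad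
    by (intro DERIV_sum DERIV_cmult cubic_gradient_line_derivative)
  then have "partial (\<lambda>y. f0 H y $ i) l x = (\<Sum>k\<in>UNIV. Jmat $ i $ k * cubic_hessian c k l x)" for i l
    unfolding partial_def by (rule DERIV_imp_deriv)
  then show ?thesis
    by (simp add: f0'_def jacobian_def hesse matrix_matrix_mult_def)
qed

lemma hamiltonian_jacobian_square:
  assumes "homogeneous_cubic H" "skew_hamiltonian A"
    and "A ** hesse H x = hesse H x ** transpose A"
  obtains N where "skew_hamiltonian_matrix N" "cpx A ** N = N ** cpx A"
    and "cpx (f0' H x ** f0' H x) = transpose N"
proof -
  define S where "S = cpx (hesse H x)"
  have sym: "transpose S = S"
    unfolding S_def by (simp add: hesse_symmetric[OF assms(1)] flip: cpx_transpose)
  have comm: "cpx A ** S = S ** transpose (cpx A)"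
    unfolding S_def by (metis assms(3) cpx_mult cpx_transpose)
  note N = symmetric_commuting_product[OF sym comm skew_hamiltonian_cpx[OF assms(2)]]
  have "cpx (f0' H x ** f0' H x) = Jmat ** S ** Jmat ** S"
    unfolding S_def f0'_eq_Jmat_hesse[OF assms(1)] by (simp add: cpx_mult cpx_Jmat matrix_mul_assoc)
  with N show ?thesis by (metis that)
qed

section \<open>Spectral projections of a generic skew-Hamiltonian matrix\<close>

lemma resolvent_from_eigenprojections:
  fixes N P1 P2 P3 :: "complex^6^6"
  assumes sum: "P1 + P2 + P3 = mat 1"
    and eig: "N ** P1 = cscale c1 P1" "N ** P2 = cscale c2 P2" "N ** P3 = cscale c3 P3"
    and nz: "1 - e * c1 \<noteq> 0" "1 - e * c2 \<noteq> 0" "1 - e * c3 \<noteq> 0"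
  shows "(mat 1 - cscale e N) ** (cscale (1 / (1 - e * c1)) P1 + cscale (1 / (1 - e * c2)) P2
      + cscale (1 / (1 - e * c3)) P3) = mat 1"
proof -
  have inv: "(mat 1 - cscale e N) ** cscale (1 / (1 - e * c)) P = P"
    if "N ** P = cscale c P" "1 - e * c \<noteq> 0" for c P
  proof -
    have "(mat 1 - cscale e N) ** P = cscale (1 - e * c) P"
      by (simp add: matrix_diff_rdistrib cscale_mult_left that(1) cscale_cscale cscale_diff_left)
    then show ?thesis using that(2) by (simp add: cscale_mult_right cscale_cscale)
  qed
  show ?thesis
    unfolding matrix_add_ldistrib inv[OF eig(1) nz(1)] inv[OF eig(2) nz(2)] inv[OF eig(3) nz(3)] sum ..
qed

lemma lagrange_combination_of_projections:
  fixes P1 P2 P3 :: "complex^6^6"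
  assumes sum: "P1 + P2 + P3 = mat 1" and "e \<noteq> 0" and "s0 = 1"
  shows "cscale ((1/s0 + 1/s1 + 1/s2 + 1/s3) / 4) (mat 1)
      + cscale e (cscale ((- 1/s0 - 1/s1 + 1/s2 + 1/s3) / (4 * e)) (mat 1 - cscale 2 P1)
        + cscale ((- 1/s0 + 1/s1 - 1/s2 + 1/s3) / (4 * e)) (mat 1 - cscale 2 P2)
        + cscale ((- 1/s0 + 1/s1 + 1/s2 - 1/s3) / (4 * e)) (mat 1 - cscale 2 P3))
    = cscale (1/s1) P1 + cscale (1/s2) P2 + cscale (1/s3) P3"
proof -
  define P0 Q1 Q2 Q3 where "P0 = (1/s0 + 1/s1 + 1/s2 + 1/s3) / 4"
    and "Q1 = (- 1/s0 - 1/s1 + 1/s2 + 1/s3) / (4 * e)" and "Q2 = (- 1/s0 + 1/s1 - 1/s2 + 1/s3) / (4 * e)"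
    and "Q3 = (- 1/s0 + 1/s1 + 1/s2 - 1/s3) / (4 * e)"
  have coeffs: "P0 + e * (- Q1 + Q2 + Q3) = 1/s1" "P0 + e * (Q1 - Q2 + Q3) = 1/s2"
    "P0 + e * (Q1 + Q2 - Q3) = 1/s3"
    unfolding P0_def Q1_def Q2_def Q3_def using \<open>e \<noteq> 0\<close> by (simp_all add: field_simps)
  have entry: "P0 * (p1 + p2 + p3) + e * (Q1 * (p2 + p3 - p1) + Q2 * (p1 + p3 - p2)
      + Q3 * (p1 + p2 - p3)) = p1 / s1 + p2 / s2 + p3 / s3" for p1 p2 p3
  proof -
    have "P0 * (p1 + p2 + p3) + e * (Q1 * (p2 + p3 - p1) + Q2 * (p1 + p3 - p2) + Q3 * (p1 + p2 - p3))
        = (P0 + e * (- Q1 + Q2 + Q3)) * p1 + (P0 + e * (Q1 - Q2 + Q3)) * p2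
          + (P0 + e * (Q1 + Q2 - Q3)) * p3"
      by (simp add: algebra_simps)
    then show ?thesis unfolding coeffs by simp
  qed
  show ?thesis
    unfolding P0_def[symmetric] Q1_def[symmetric] Q2_def[symmetric] Q3_def[symmetric] sum[symmetric]
    by (simp add: vec_eq_iff cscale_def entry)
qed

locale generic_skew_hamiltonian =
  fixes A :: "complex^6^6" and lam \<alpha> \<beta> \<gamma> :: "nat \<Rightarrow> complex"
  assumes skew: "skew_hamiltonian_matrix A"
    and charpoly: "\<And>z. det (mat z - A) = ((z - lam 1) * (z - lam 2) * (z - lam 3))^2"
    and distinct: "lam 1 \<noteq> lam 2" "lam 1 \<noteq> lam 3" "lam 2 \<noteq> lam 3"
    and interp: "\<And>i j. i \<in> {1,2,3} \<Longrightarrow> j \<in> {1,2,3} \<Longrightarrow>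
      \<alpha> i + \<beta> i * lam j + \<gamma> i * (lam j)^2 = (if i = j then - 1 else 1)"
begin

text \<open>Keep the indices \<open>1, 2, 3\<close> as numerals; otherwise \<open>simp\<close> rewrites \<open>lam 1\<close> to
  \<open>lam (Suc 0)\<close> and facts stated for \<open>lam 1\<close> stop applying.\<close>
declare One_nat_def [simp del]

definition B :: "nat \<Rightarrow> complex^6^6" where
  "B i = quad_poly_mat A (\<alpha> i) (\<beta> i) (\<gamma> i)"

definition proj :: "nat \<Rightarrow> complex^6^6" where
  "proj i = quad_poly_mat A ((1 - \<alpha> i) / 2) (- \<beta> i / 2) (- \<gamma> i / 2)"

text \<open>For \<open>N\<^sup>T = (f\<^sub>0')\<^sup>2\<close> this is the coefficient \<open>q\<^sub>i\<close> of the theorem.\<close>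
definition q_of :: "complex^6^6 \<Rightarrow> nat \<Rightarrow> complex" where
  "q_of N i = trace (N ** B i) / 8"

lemma
  shows cubic: "A ** A ** A = cscale (lam 1 + lam 2 + lam 3) (A ** A)
      - cscale (lam 1 * lam 2 + lam 1 * lam 3 + lam 2 * lam 3) A + cscale (lam 1 * lam 2 * lam 3) (mat 1)"
    and trace_A: "trace A = 2 * (lam 1 + lam 2 + lam 3)"
    and trace_A_squared: "trace (A ** A) = 2 * ((lam 1)^2 + (lam 2)^2 + (lam 3)^2)"
proof -
  define e1 e2 e3 where "e1 = trace A / 2" and "e2 = (trace A)^2 / 8 - trace (A ** A) / 4"
    and "e3 = ((trace A)^3 - 6 * trace A * trace (A ** A) + 8 * trace (A ** A ** A)) / 48"
  have A3: "A ** A ** A = cscale e1 (A ** A) - cscale e2 A + cscale e3 (mat 1)"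
    unfolding e1_def e2_def e3_def by (rule skew_hamiltonian_cubic[OF skew])
  have roots: "\<forall>z \<in> {lam 1, lam 2, lam 3}. z^3 - e1 * z^2 + e2 * z - e3 = 0"
    by (intro ballI cubic_eq_0_at_eigenvalue[OF A3]) (auto simp: charpoly)
  note e = monic_cubic_coeffs_from_roots[OF distinct roots]
  show "A ** A ** A = cscale (lam 1 + lam 2 + lam 3) (A ** A)
      - cscale (lam 1 * lam 2 + lam 1 * lam 3 + lam 2 * lam 3) A + cscale (lam 1 * lam 2 * lam 3) (mat 1)"
    using A3 by (simp only: e)
  show tr: "trace A = 2 * (lam 1 + lam 2 + lam 3)"
    using e(1) unfolding e1_def by simp
  have "2 * trace (A ** A) = (trace A)^2 - 8 * e2"
    unfolding e2_def by (simp add: field_simps)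
  also have "\<dots> = 2 * (2 * ((lam 1)^2 + (lam 2)^2 + (lam 3)^2))"
    unfolding tr e(2) by algebra
  finally show "trace (A ** A) = 2 * ((lam 1)^2 + (lam 2)^2 + (lam 3)^2)"
    by (metis mult_left_cancel zero_neq_numeral)
qed

lemma other_indices:
  assumes "j \<in> {1, 2, 3}"
  obtains k l where "k \<in> {1, 2, 3}" "l \<in> {1, 2, 3}" "k \<noteq> j" "l \<noteq> j"
    "lam j \<noteq> lam k" "lam j \<noteq> lam l" "lam k \<noteq> lam l"
    "lam j + lam k + lam l = lam 1 + lam 2 + lam 3"
    "lam j * lam k + lam j * lam l + lam k * lam l = lam 1 * lam 2 + lam 1 * lam 3 + lam 2 * lam 3"
    "lam j * lam k * lam l = lam 1 * lam 2 * lam 3"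
    "(lam j)^2 + (lam k)^2 + (lam l)^2 = (lam 1)^2 + (lam 2)^2 + (lam 3)^2"
proof -
  consider "j = 1" | "j = 2" | "j = 3" using assms by blast
  then show ?thesis
  proof cases
    case 1
    show ?thesis by (rule that[of 2 3]) (use 1 distinct in auto)
  next
    case 2
    show ?thesis by (rule that[of 1 3]) (use 2 distinct in \<open>auto simp: algebra_simps\<close>)
  next
    case 3
    show ?thesis by (rule that[of 1 2]) (use 3 distinct in \<open>auto simp: algebra_simps\<close>)
  qed
qed

lemma proj_lagrange:
  assumes "i \<in> {1, 2, 3}" "j \<in> {1, 2, 3}"
  shows "(1 - \<alpha> i) / 2 + (- \<beta> i / 2) * lam j + (- \<gamma> i / 2) * (lam j)^2 = (if i = j then 1 else 0)"
proof -
  have "(1 - \<alpha> i) / 2 + (- \<beta> i / 2) * lam j + (- \<gamma> i / 2) * (lam j)^2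
      = (1 - (\<alpha> i + \<beta> i * lam j + \<gamma> i * (lam j)^2)) / 2"
    by (simp add: field_simps)
  also have "\<dots> = (if i = j then 1 else 0)"
    unfolding interp[OF assms] by simp
  finally show ?thesis .
qed

lemma proj_eigen:
  assumes "j \<in> {1, 2, 3}"
  shows "A ** proj j = cscale (lam j) (proj j)"
proof -
  obtain k l where kl: "k \<in> {1, 2, 3}" "l \<in> {1, 2, 3}" "k \<noteq> j" "l \<noteq> j" "lam k \<noteq> lam l"
    and sym: "lam j + lam k + lam l = lam 1 + lam 2 + lam 3"
      "lam j * lam k + lam j * lam l + lam k * lam l = lam 1 * lam 2 + lam 1 * lam 3 + lam 2 * lam 3"
      "lam j * lam k * lam l = lam 1 * lam 2 * lam 3"
    using other_indices[OF assms] by metis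
  have "A ** A ** A = cscale (lam j + lam k + lam l) (A ** A)
      - cscale (lam j * lam k + lam j * lam l + lam k * lam l) A + cscale (lam j * lam k * lam l) (mat 1)"
    unfolding sym by (rule cubic)
  then show ?thesis
    unfolding proj_def
    by (rule quad_poly_mat_eigenvector) (use kl assms proj_lagrange in auto)
qed

lemma trace_proj:
  assumes "j \<in> {1, 2, 3}"
  shows "trace (proj j) = 2"
proof -
  let ?L = "\<lambda>z. (1 - \<alpha> j) / 2 + (- \<beta> j / 2) * z + (- \<gamma> j / 2) * z^2"
  have "trace (proj j) = 2 * (?L (lam 1) + ?L (lam 2) + ?L (lam 3))"
    unfolding proj_def trace_quad_poly_mat trace_A trace_A_squared by (simp add: field_simps)
  also have "\<dots> = 2"
  proof -
    have L: "?L (lam 1) = (if j = 1 then 1 else 0)" "?L (lam 2) = (if j = 2 then 1 else 0)"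
      "?L (lam 3) = (if j = 3 then 1 else 0)"
      by (rule proj_lagrange[OF assms]; simp)+
    show ?thesis unfolding L using assms by auto
  qed
  finally show ?thesis .
qed

lemma interp_sums: "\<alpha> 1 + \<alpha> 2 + \<alpha> 3 = 1" "\<beta> 1 + \<beta> 2 + \<beta> 3 = 0" "\<gamma> 1 + \<gamma> 2 + \<gamma> 3 = 0"
proof -
  have sum: "(\<gamma> 1 + \<gamma> 2 + \<gamma> 3) * z^2 + (\<beta> 1 + \<beta> 2 + \<beta> 3) * z + (\<alpha> 1 + \<alpha> 2 + \<alpha> 3 - 1)
      = (\<alpha> 1 + \<beta> 1 * z + \<gamma> 1 * z^2) + (\<alpha> 2 + \<beta> 2 * z + \<gamma> 2 * z^2)
        + (\<alpha> 3 + \<beta> 3 * z + \<gamma> 3 * z^2) - 1" for z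
    by (simp add: algebra_simps)
  have "(\<gamma> 1 + \<gamma> 2 + \<gamma> 3) * (lam k)^2 + (\<beta> 1 + \<beta> 2 + \<beta> 3) * lam k
      + (\<alpha> 1 + \<alpha> 2 + \<alpha> 3 - 1) = 0" if "k \<in> {1, 2, 3}" for k
    unfolding sum using that by (auto simp: interp)
  from quadratic_eq_0_at_three_points[OF this this this distinct]
  show "\<alpha> 1 + \<alpha> 2 + \<alpha> 3 = 1" "\<beta> 1 + \<beta> 2 + \<beta> 3 = 0" "\<gamma> 1 + \<gamma> 2 + \<gamma> 3 = 0"
    by simp_all
qed

lemma sum_B: "B 1 + B 2 + B 3 = mat 1"
  unfolding B_def quad_poly_mat_add interp_sums quad_poly_mat_const ..

lemma sum_proj: "proj 1 + proj 2 + proj 3 = mat 1"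
proof -
  have coeffs: "(1 - \<alpha> 1) / 2 + (1 - \<alpha> 2) / 2 + (1 - \<alpha> 3) / 2 = (3 - (\<alpha> 1 + \<alpha> 2 + \<alpha> 3)) / 2"
    "- \<beta> 1 / 2 + - \<beta> 2 / 2 + - \<beta> 3 / 2 = - (\<beta> 1 + \<beta> 2 + \<beta> 3) / 2"
    "- \<gamma> 1 / 2 + - \<gamma> 2 / 2 + - \<gamma> 3 / 2 = - (\<gamma> 1 + \<gamma> 2 + \<gamma> 3) / 2"
    by (simp_all add: field_simps)
  show ?thesis
    unfolding proj_def quad_poly_mat_add coeffs interp_sums by (simp add: quad_poly_mat_const)
qed

lemma B_eq_proj: "B j = mat 1 - cscale 2 (proj j)"
  unfolding B_def proj_def cscale_quad_poly_mat quad_poly_mat_const[of A 1, symmetric] quad_poly_mat_diff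
  by (simp add: field_simps)

lemma sum_q_of: "q_of N 1 + q_of N 2 + q_of N 3 = trace N / 8"
  unfolding q_of_def
  by (simp add: add_divide_distrib[symmetric] trace_add[symmetric] matrix_add_ldistrib[symmetric] sum_B)

lemma trace_proj_q_of:
  "trace (N ** proj 1) = 4 * (q_of N 2 + q_of N 3)"
  "trace (N ** proj 2) = 4 * (q_of N 1 + q_of N 3)"
  "trace (N ** proj 3) = 4 * (q_of N 1 + q_of N 2)"
proof -
  have pair: "trace (N ** proj l) = 4 * (q_of N j + q_of N k)" if "B j + B k + B l = mat 1" for j k l
  proof -
    have "B j + B k = mat 1 - B l"
      using that by (simp add: eq_diff_eq)
    then have "B j + B k = cscale 2 (proj l)"
      unfolding B_eq_proj[of l] by simp
    then have "trace (N ** B j) + trace (N ** B k) = 2 * trace (N ** proj l)"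
      by (simp add: cscale_mult_right trace_cscale flip: trace_add matrix_add_ldistrib)
    then have "trace (N ** proj l) = (trace (N ** B j) + trace (N ** B k)) / 2"
      by simp
    also have "\<dots> = 4 * (q_of N j + q_of N k)"
      unfolding q_of_def by (simp add: field_simps)
    finally show ?thesis .
  qed
  have "B 2 + B 3 + B 1 = mat 1" "B 1 + B 3 + B 2 = mat 1" "B 1 + B 2 + B 3 = mat 1"
    using sum_B by (simp_all add: ac_simps)
  then show "trace (N ** proj 1) = 4 * (q_of N 2 + q_of N 3)"
    "trace (N ** proj 2) = 4 * (q_of N 1 + q_of N 3)"
    "trace (N ** proj 3) = 4 * (q_of N 1 + q_of N 2)"
    by (simp_all only: pair)
qed

lemma commuting_scalar_on_proj:
  assumes "skew_hamiltonian_matrix N" "A ** N = N ** A" "j \<in> {1, 2, 3}"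
  shows "N ** proj j = cscale (trace (N ** proj j) / 2) (proj j)"
proof -
  obtain k l where "lam j \<noteq> lam k" "lam j \<noteq> lam l"
    and sym: "lam j + lam k + lam l = lam 1 + lam 2 + lam 3"
      "(lam j)^2 + (lam k)^2 + (lam l)^2 = (lam 1)^2 + (lam 2)^2 + (lam 3)^2"
    using other_indices[OF assms(3)] by metis
  then obtain c where c: "N ** proj j = cscale c (proj j)"
    using commuting_skew_hamiltonian_eigenvector[OF skew assms(1,2) proj_eigen[OF assms(3)]]
      trace_A trace_A_squared by metis
  then have "trace (N ** proj j) = 2 * c"
    by (simp add: trace_cscale trace_proj[OF assms(3)])
  then show ?thesis using c by simp
qed

lemma Pi_inverse:
  fixes M :: "real^6^6" and \<epsilon> :: real
  assumes skN: "skew_hamiltonian_matrix N" and AN: "A ** N = N ** A"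
    and MN: "cpx (M ** M) = transpose N"
    and "\<epsilon> \<noteq> 0" and e: "e = complex_of_real (\<epsilon>^2)" and "s0 = 1"
    and s: "s1 = 1 - 2 * e * (q_of N 2 + q_of N 3)" "s2 = 1 - 2 * e * (q_of N 1 + q_of N 3)"
      "s3 = 1 - 2 * e * (q_of N 1 + q_of N 2)"
    and nz: "s1 * s2 * s3 \<noteq> 0"
  shows "invertible (Jmat - \<epsilon>^2 *\<^sub>R (M ** M ** Jmat)) \<and>
    cpx (matrix_inv (Jmat - \<epsilon>^2 *\<^sub>R (M ** M ** Jmat))) =
      cscale (- ((1/s0 + 1/s1 + 1/s2 + 1/s3) / 4)) Jmat
      - cscale e (cscale ((- 1/s0 - 1/s1 + 1/s2 + 1/s3) / (4 * e)) (B 1 ** Jmat)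
        + cscale ((- 1/s0 + 1/s1 - 1/s2 + 1/s3) / (4 * e)) (B 2 ** Jmat)
        + cscale ((- 1/s0 + 1/s1 + 1/s2 - 1/s3) / (4 * e)) (B 3 ** Jmat))"
proof (rule invertible_cpx_right_inverse)
  define c where "c j = trace (N ** proj j) / 2" for j
  define Y where "Y = cscale (1/s1) (proj 1) + cscale (1/s2) (proj 2) + cscale (1/s3) (proj 3)"
  have eig: "N ** proj j = cscale (c j) (proj j)" if "j \<in> {1, 2, 3}" for j
    unfolding c_def using commuting_scalar_on_proj[OF skN AN that] .
  have s_c: "s1 = 1 - e * c 1" "s2 = 1 - e * c 2" "s3 = 1 - e * c 3"
    unfolding s c_def trace_proj_q_of by simp_all
  have resolvent: "(mat 1 - cscale e N) ** Y = mat 1"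
    unfolding Y_def s_c
    by (rule resolvent_from_eigenprojections[OF sum_proj eig eig eig]) (use nz s_c in auto)
  moreover have RHS: "cscale (- ((1/s0 + 1/s1 + 1/s2 + 1/s3) / 4)) Jmat
      - cscale e (cscale ((- 1/s0 - 1/s1 + 1/s2 + 1/s3) / (4 * e)) (B 1 ** Jmat)
        + cscale ((- 1/s0 + 1/s1 - 1/s2 + 1/s3) / (4 * e)) (B 2 ** Jmat)
        + cscale ((- 1/s0 + 1/s1 + 1/s2 - 1/s3) / (4 * e)) (B 3 ** Jmat)) = - (Y ** Jmat)"
  proof -
    have "e \<noteq> 0" using \<open>\<epsilon> \<noteq> 0\<close> e by simp
    show ?thesis
      unfolding Y_def B_eq_proj
      by (simp add: matrix_add_rdistrib cscale_mult_left cscale_minus_left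
          flip: lagrange_combination_of_projections[OF sum_proj \<open>e \<noteq> 0\<close> \<open>s0 = 1\<close>])
  qed
  moreover have cPi: "cpx (Jmat - \<epsilon>^2 *\<^sub>R (M ** M ** Jmat)) = Jmat ** (mat 1 - cscale e N)"
  proof -
    have "cpx (M ** M ** Jmat) = Jmat ** N"
      using skN unfolding skew_hamiltonian_matrix_def cpx_mult[of "M ** M"] MN cpx_Jmat .
    then show ?thesis
      by (simp add: cpx_diff cpx_scaleR cpx_Jmat e matrix_diff_ldistrib cscale_mult_right)
  qed
  show "cpx (Jmat - \<epsilon>^2 *\<^sub>R (M ** M ** Jmat)) ** (cscale (- ((1/s0 + 1/s1 + 1/s2 + 1/s3) / 4)) Jmat
      - cscale e (cscale ((- 1/s0 - 1/s1 + 1/s2 + 1/s3) / (4 * e)) (B 1 ** Jmat)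
        + cscale ((- 1/s0 + 1/s1 - 1/s2 + 1/s3) / (4 * e)) (B 2 ** Jmat)
        + cscale ((- 1/s0 + 1/s1 + 1/s2 - 1/s3) / (4 * e)) (B 3 ** Jmat))) = mat 1"
  proof -
    have "Jmat ** (mat 1 - cscale e N) ** - (Y ** Jmat) = - (Jmat ** ((mat 1 - cscale e N) ** Y) ** Jmat)"
      by (simp add: matrix_minus_right matrix_mul_assoc)
    also have "\<dots> = mat 1"
      by (simp add: resolvent Jmat_squared)
    finally show ?thesis unfolding cPi RHS .
  qed
qed

end

theorem mainTheorem15:
  fixes A :: "real ^ 6 ^ 6" and H0 :: "real ^ 6 \<Rightarrow> real"
    and lam \<alpha> \<beta> \<gamma> :: "nat \<Rightarrow> complex"
  assumes skewH: "skew_hamiltonian A"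
    and cubic: "homogeneous_cubic H0"
    and commute: "\<And>x. A ** hesse H0 x = hesse H0 x ** transpose A"
    and charpoly: "\<And>z::complex. det (mat z - cpx A)
                     = ((z - lam 1) * (z - lam 2) * (z - lam 3))^2"
    and distinct: "lam 1 \<noteq> lam 2" "lam 1 \<noteq> lam 3" "lam 2 \<noteq> lam 3"
    and interp: "\<And>i j. i \<in> {1,2,3} \<Longrightarrow> j \<in> {1,2,3} \<Longrightarrow>
                   \<alpha> i + \<beta> i * lam j + \<gamma> i * (lam j)^2 = (if i = j then - 1 else 1)"
    and nondeg: "\<exists>x. det (f0' H0 x) \<noteq> 0"
  defines "B \<equiv> \<lambda>i. Bmat A (\<alpha> i) (\<beta> i) (\<gamma> i)"
    and "q \<equiv> \<lambda>i. qfun (Bmat A (\<alpha> i) (\<beta> i) (\<gamma> i)) H0"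
  shows "(\<forall>x. complex_of_real (p0 H0 x) = q 1 x + q 2 x + q 3 x) \<and>
    (\<forall>(\<epsilon>::real) x. \<epsilon> \<noteq> 0 \<longrightarrow>
      (let e2 = complex_of_real (\<epsilon>^2);
           s0 = 1;
           s1 = 1 - 2 * e2 * (q 2 x + q 3 x);
           s2 = 1 - 2 * e2 * (q 1 x + q 3 x);
           s3 = 1 - 2 * e2 * (q 1 x + q 2 x);
           P0 = (1/s0 + 1/s1 + 1/s2 + 1/s3) / 4;
           Q1 = (- 1/s0 - 1/s1 + 1/s2 + 1/s3) / (4 * e2);
           Q2 = (- 1/s0 + 1/s1 - 1/s2 + 1/s3) / (4 * e2);
           Q3 = (- 1/s0 + 1/s1 + 1/s2 - 1/s3) / (4 * e2);
           Pi = Jmat - (\<epsilon>^2) *\<^sub>R (f0' H0 x ** f0' H0 x ** Jmat)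
       in s1 * s2 * s3 \<noteq> 0 \<longrightarrow>
          invertible Pi \<and>
          cpx (matrix_inv Pi) =
            cscale (- P0) Jmat
            - cscale e2 (cscale Q1 (B 1 ** Jmat) + cscale Q2 (B 2 ** Jmat) + cscale Q3 (B 3 ** Jmat))))"
proof -
  interpret sh: generic_skew_hamiltonian "cpx A" lam \<alpha> \<beta> \<gamma>
    by unfold_locales (use skew_hamiltonian_cpx[OF skewH] charpoly distinct interp in auto)
  have B_eq: "B i = sh.B i" for i
    unfolding B_def sh.B_def Bmat_eq_quad_poly_mat ..
  have q_eq: "q i x = sh.q_of N i" if "cpx (f0' H0 x ** f0' H0 x) = transpose N" for i x N
    unfolding q_def qfun_def sh.q_of_def that B_eq[unfolded B_def, symmetric]
    by (simp add: trace_transpose flip: matrix_transpose_mul)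
  show ?thesis
    apply (intro conjI allI impI)
    subgoal for x
    proof -
      obtain N where N: "cpx (f0' H0 x ** f0' H0 x) = transpose N"
        using hamiltonian_jacobian_square[OF cubic skewH commute] by blast
      show ?thesis
        unfolding q_eq[OF N] sh.sum_q_of p0_def using arg_cong[OF N, of trace]
        by (simp add: trace_cpx trace_transpose)
    qed
    subgoal premises \<epsilon> for \<epsilon> x
    proof -
      obtain N where N: "skew_hamiltonian_matrix N" "cpx A ** N = N ** cpx A"
        "cpx (f0' H0 x ** f0' H0 x) = transpose N"
        using hamiltonian_jacobian_square[OF cubic skewH commute] by blast
      show ?thesis
        unfolding Let_def q_eq[OF N(3)] B_eq
        using sh.Pi_inverse[OF N \<epsilon> refl refl refl refl refl] by blast
    qed
    done
qed

end
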